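(* Let $K,F,g$ be positive integers with $K\ge g\ge 2$. Let $\mathbf{P}=[p_{j,k}]$ be an $F\times K$ array whose entries are either a special symbol $*$ or nonnegative integers, satisfying: (C2') each integer occurring in $\mathbf{P}$ occurs exactly $g$ times; (C3) for any two distinct entries with $p_{j_1,k_1}=p_{j_2,k_2}=s$ an integer, we have $j_1\neq j_2$, $k_1\neq k_2$, and $p_{j_1,k_2}=p_{j_2,k_1}=*$; (C4) each row of $\mathbf{P}$ contains exactly $g-1$ symbols $*$. Then $F\ge\binom{K}{g-1}$. *)

theory Defs
  imports Main
begin

end

theory Submission
  imports Defs
begin

text \<open>Call the set of columns in which row \<open>j\<close> has a \<open>*\<close> the star set of \<open>j\<close>.
  If \<open>p\<^sub>j\<^sub>,\<^sub>k = s\<close> is an integer, condition (C3) forces the other \<open>g - 1\<close> columns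
  containing \<open>s\<close> into the star set of \<open>j\<close>, and (C4) says these are all of it. Hence the columns
  of \<open>s\<close> are exactly \<open>{k} \<union> star set of j\<close>, and the same holds for every other row \<open>j'\<close>
  containing \<open>s\<close>. Choosing the row \<open>j'\<close> in which \<open>s\<close> sits in a column \<open>k'\<close> of the star set of
  \<open>j\<close> shows that star sets are closed under exchanging one element \<open>k'\<close> for one outside
  element \<open>k\<close>. Starting from any row, exchanges reach every \<open>(g - 1)\<close>-subset of the columns,
  so all \<open>K choose (g - 1)\<close> of them are star sets of distinct rows.\<close>

lemma exchange_closed_contains_equicard:
  assumes "S \<in> \<S>" "finite S" "card S = card A" "finite A" "A \<subseteq> U"
    and exchange: "\<And>S k k'. S \<in> \<S> \<Longrightarrow> k \<in> U - S \<Longrightarrow> k' \<in> S \<Longrightarrow> insert k (S - {k'}) \<in> \<S>"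
  shows "A \<in> \<S>"
  using assms(1-3)
proof (induction "card (A - S)" arbitrary: S)
  case 0
  then have "A \<subseteq> S" using \<open>finite A\<close> by auto
  then show ?case using 0 card_subset_eq by metis
next
  case (Suc n)
  then obtain k where k: "k \<in> A" "k \<notin> S" by (metis Diff_iff card.empty ex_in_conv nat.distinct(1))
  have "card (S - A) = card (A - S)"
    using Suc.prems \<open>finite A\<close> by (simp add: card_Diff_subset_Int Int_commute)
  then obtain k' where k': "k' \<in> S" "k' \<notin> A" using Suc.hyps(2)
    by (metis Diff_iff card.empty ex_in_conv nat.distinct(1))
  define S' where "S' = insert k (S - {k'})"
  have "S' \<in> \<S>" unfolding S'_def using exchange Suc.prems(1) k k' assms(5) by blast
  moreover have "A - S' = (A - S) - {k}" using k' unfolding S'_def by auto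
  moreover have "card S' = card S"
    using k k' Suc.prems(2) card_gt_0_iff[of S] unfolding S'_def by auto
  moreover have "finite S'" using Suc.prems(2) unfolding S'_def by simp
  moreover have "card (A - S') = n"
    using \<open>A - S' = (A - S) - {k}\<close> Suc.hyps(2) k by (metis DiffI card_Diff_singleton diff_Suc_1)
  ultimately show ?case using Suc.hyps(1) Suc.prems(3) by metis
qed

locale placement_delivery_array =
  fixes F K g :: nat and P :: "nat \<Rightarrow> nat \<Rightarrow> nat option"
  assumes C2: "\<And>s. (\<exists>j<F. \<exists>k<K. P j k = Some s) \<Longrightarrow>
               card {(j, k). j < F \<and> k < K \<and> P j k = Some s} = g"
    and C3: "\<And>j1 k1 j2 k2 s. j1 < F \<Longrightarrow> k1 < K \<Longrightarrow> j2 < F \<Longrightarrow> k2 < K \<Longrightarrow>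
               (j1, k1) \<noteq> (j2, k2) \<Longrightarrow> P j1 k1 = Some s \<Longrightarrow> P j2 k2 = Some s \<Longrightarrow>
               j1 \<noteq> j2 \<and> k1 \<noteq> k2 \<and> P j1 k2 = None \<and> P j2 k1 = None"
    and C4: "\<And>j. j < F \<Longrightarrow> card {k. k < K \<and> P j k = None} = g - 1"
begin

definition star_set :: "nat \<Rightarrow> nat set" where
  "star_set j = {k. k < K \<and> P j k = None}"

definition occurrences :: "nat \<Rightarrow> (nat \<times> nat) set" where
  "occurrences s = {(j, k). j < F \<and> k < K \<and> P j k = Some s}"

lemma finite_star_set: "finite (star_set j)"
  unfolding star_set_def by simp

lemma card_star_set: "j < F \<Longrightarrow> card (star_set j) = g - 1"
  unfolding star_set_def using C4 .

lemma inj_on_snd_occurrences: "inj_on snd (occurrences s)"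
proof (rule inj_onI)
  fix x y assume "x \<in> occurrences s" "y \<in> occurrences s" "snd x = snd y"
  then show "x = y" using C3[of "fst x" "snd x" "fst y" "snd y" s]
    by (cases "fst x = fst y") (auto simp: occurrences_def prod_eq_iff)
qed

lemma card_occurrence_columns:
  assumes "(j, k) \<in> occurrences s"
  shows "card (snd ` occurrences s) = g"
  using assms C2 card_image[OF inj_on_snd_occurrences]
  unfolding occurrences_def by fastforce

lemma occurrence_columns_eq:
  assumes "(j, k) \<in> occurrences s"
  shows "snd ` occurrences s = insert k (star_set j)"
proof -
  have jk: "j < F" "k < K" "P j k = Some s" using assms by (auto simp: occurrences_def)
  have k_col: "k \<in> snd ` occurrences s" using assms by force
  have "snd ` occurrences s - {k} \<subseteq> star_set j"
  proof
    fix b assume "b \<in> snd ` occurrences s - {k}"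
    then obtain a where "a < F" "b < K" "P a b = Some s" "b \<noteq> k"
      by (auto simp: occurrences_def)
    then show "b \<in> star_set j" using C3[of j k a b s] jk by (auto simp: star_set_def)
  qed
  moreover have "card (snd ` occurrences s - {k}) = card (star_set j)"
    using card_occurrence_columns[OF assms] card_star_set[OF jk(1)] k_col by simp
  ultimately have "snd ` occurrences s - {k} = star_set j"
    using card_subset_eq finite_star_set by metis
  then show ?thesis using k_col by blast
qed

lemma star_set_exchange:
  assumes "j < F" "k < K" "k \<notin> star_set j" "k' \<in> star_set j"
  shows "\<exists>j'<F. star_set j' = insert k (star_set j - {k'})"
proof -
  obtain s where "P j k = Some s" using assms(2,3) by (auto simp: star_set_def)
  then have jk: "(j, k) \<in> occurrences s" using assms(1,2) by (simp add: occurrences_def)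
  have "k' \<in> snd ` occurrences s" using occurrence_columns_eq[OF jk] assms(4) by simp
  then obtain j' where j'k': "(j', k') \<in> occurrences s" by force
  then have "j' < F" "k' \<notin> star_set j'" by (auto simp: occurrences_def star_set_def)
  have "insert k' (star_set j') = insert k (star_set j)"
    using occurrence_columns_eq[OF jk] occurrence_columns_eq[OF j'k'] by simp
  then have "star_set j' = insert k (star_set j) - {k'}"
    using \<open>k' \<notin> star_set j'\<close> by (metis Diff_insert_absorb)
  also have "\<dots> = insert k (star_set j - {k'})" using assms(3,4) by auto
  finally show ?thesis using \<open>j' < F\<close> by blast
qed

lemma subset_is_star_set:
  assumes "F > 0" "A \<subseteq> {..<K}" "card A = g - 1"
  shows "A \<in> star_set ` {..<F}"
proof (rule exchange_closed_contains_equicard[where S = "star_set 0" and U = "{..<K}"])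
  show "card (star_set 0) = card A" using assms card_star_set by simp
  show "finite A" using assms(2) finite_subset by blast
  show "\<And>S k k'. S \<in> star_set ` {..<F} \<Longrightarrow> k \<in> {..<K} - S \<Longrightarrow> k' \<in> S \<Longrightarrow>
      insert k (S - {k'}) \<in> star_set ` {..<F}"
    using star_set_exchange by fastforce
qed (use assms finite_star_set in auto)

lemma choose_le_rows:
  assumes "F > 0"
  shows "K choose (g - 1) \<le> F"
proof -
  have "K choose (g - 1) = card {A. A \<subseteq> {..<K} \<and> card A = g - 1}"
    by (simp add: n_subsets)
  also have "\<dots> \<le> card (star_set ` {..<F})"
    using subset_is_star_set[OF assms] by (intro card_mono) auto
  also have "\<dots> \<le> F"
    using card_image_le[of "{..<F}" star_set] by simp
  finally show ?thesis .
qed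

end

theorem lemma2:
  fixes K F g :: nat and P :: "nat \<Rightarrow> nat \<Rightarrow> nat option"
  assumes "K > 0" "F > 0" "g \<ge> 2" "K \<ge> g"
    and C2: "\<And>s. (\<exists>j<F. \<exists>k<K. P j k = Some s) \<Longrightarrow>
               card {(j, k). j < F \<and> k < K \<and> P j k = Some s} = g"
    and C3: "\<And>j1 k1 j2 k2 s. j1 < F \<Longrightarrow> k1 < K \<Longrightarrow> j2 < F \<Longrightarrow> k2 < K \<Longrightarrow>
               (j1, k1) \<noteq> (j2, k2) \<Longrightarrow> P j1 k1 = Some s \<Longrightarrow> P j2 k2 = Some s \<Longrightarrow>
               j1 \<noteq> j2 \<and> k1 \<noteq> k2 \<and> P j1 k2 = None \<and> P j2 k1 = None"
    and C4: "\<And>j. j < F \<Longrightarrow> card {k. k < K \<and> P j k = None} = g - 1"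
  shows "F \<ge> K choose (g - 1)"
proof -
  interpret placement_delivery_array F K g P
    using C2 C3 C4 by unfold_locales
  show ?thesis using choose_le_rows \<open>F > 0\<close> .
qed

end
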